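(* Let $h>0$ and $\mathbb{T}:=\{0,h,2h,\ldots\}$. Let $p_0,p_1\in\mathbb{C}\setminus\{-\tfrac{1}{h}\}$ with $p_0\ne p_1$ and $0<|1+hp_0||1+hp_1|\ne 1$, and define $p:\mathbb{T}\to\mathbb{C}$ by $p(t)=p_0$ if $\tfrac{t}{h}$ is even and $p(t)=p_1$ if $\tfrac{t}{h}$ is odd. Then the equation $\Delta_h x(t)-p(t)x(t)=0$, $t\in\mathbb{T}$, where $\Delta_hx(t):=\frac{x(t+h)-x(t)}{h}$, has Ulam stability on $\mathbb{T}$ with Ulam stability constant $$K_0:=h\max\left\{\frac{1+|1+hp_0|}{\big|1-|1+hp_0||1+hp_1|\big|},\ \frac{1+|1+hp_1|}{\big|1-|1+hp_0||1+hp_1|\big|}\right\}.$$ Moreover, if $|1+hp_0||1+hp_1|>1$, then $K_0$ is the minimum Ulam stability constant for this equation.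
   Context: A constant $K>0$ is an Ulam stability constant for the equation on $\mathbb{T}$ if for every $\varepsilon>0$ and every $\phi:\mathbb{T}\to\mathbb{C}$ with $|\Delta_h\phi(t)-p(t)\phi(t)|\le\varepsilon$ for all $t\in\mathbb{T}$, there exists a solution $x:\mathbb{T}\to\mathbb{C}$ of the equation with $|\phi(t)-x(t)|\le K\varepsilon$ for all $t\in\mathbb{T}$; the equation has Ulam stability if such $K$ exists. "Minimum" means no positive number smaller than $K_0$ is an Ulam stability constant. *)

theory Defs
  imports Complex_Main
begin

definition hZ :: "real \<Rightarrow> real set" where
  "hZ h = {real n * h | n. True}"

definition hdiff :: "real \<Rightarrow> (real \<Rightarrow> complex) \<Rightarrow> real \<Rightarrow> complex" where
  "hdiff h x t = (x (t + h) - x t) / complex_of_real h"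

definition pcoef :: "real \<Rightarrow> complex \<Rightarrow> complex \<Rightarrow> real \<Rightarrow> complex" where
  "pcoef h p0 p1 t = (if (\<exists>k::nat. t / h = real (2 * k)) then p0 else p1)"

definition ulam_constant :: "real \<Rightarrow> (real \<Rightarrow> complex) \<Rightarrow> real \<Rightarrow> bool" where
  "ulam_constant h p K \<longleftrightarrow> K > 0 \<and>
     (\<forall>\<epsilon>>0. \<forall>\<phi>::real \<Rightarrow> complex.
        (\<forall>t\<in>hZ h. cmod (hdiff h \<phi> t - p t * \<phi> t) \<le> \<epsilon>) \<longrightarrow>
        (\<exists>x::real \<Rightarrow> complex. (\<forall>t\<in>hZ h. hdiff h x t - p t * x t = 0) \<and>
                              (\<forall>t\<in>hZ h. cmod (\<phi> t - x t) \<le> K * \<epsilon>)))"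

definition ulam_stable :: "real \<Rightarrow> (real \<Rightarrow> complex) \<Rightarrow> bool" where
  "ulam_stable h p \<longleftrightarrow> (\<exists>K. ulam_constant h p K)"

definition min_ulam_constant :: "real \<Rightarrow> (real \<Rightarrow> complex) \<Rightarrow> real \<Rightarrow> bool" where
  "min_ulam_constant h p K0 \<longleftrightarrow> ulam_constant h p K0 \<and>
     (\<forall>K. 0 < K \<and> K < K0 \<longrightarrow> \<not> ulam_constant h p K)"

end

theory Submission
  imports Defs
begin

(* Sampling on the grid turns the equation into x(n+1) = c(n) x(n) with c alternating between
   a = 1 + h p0 and b = 1 + h p1, the residual being multiplied by h. If phi has residuals r(n),
   the error e = phi - x must solve e(n+1) = c(n) e(n) + r(n). On even indices this is the scalar
   recurrence w(m+1) = a b w(m) + (b r(2m) + r(2m+1)), which has a solution bounded by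
   (1 + |b|) delta / |1 - |a||b||: iterate forwards from 0 if |a||b| < 1, sum the series backwards
   if |a||b| > 1. The odd entries a w(m) + r(2m) are then bounded by (1 + |a|) delta / |1 - |a||b||.
   For |a||b| > 1 these bounds are attained: every nonzero exact solution grows like (|a||b|)^m,
   so only the zero solution stays close to a sequence whose residual phases make all the
   triangle inequalities above equalities. *)

lemma affine_recurrence_bounded_solution_contracting:
  fixes q :: "'a::real_normed_field" and g :: "nat \<Rightarrow> 'a"
  assumes q: "norm q < 1" and g: "\<And>m. norm (g m) \<le> G"
  shows "\<exists>w. (\<forall>m. w (Suc m) = q * w m + g m) \<and> (\<forall>m. norm (w m) \<le> G / (1 - norm q))"
proof -
  define w where "w = rec_nat 0 (\<lambda>m u. q * u + g m)"
  have "norm (w m) \<le> G / (1 - norm q)" for m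
  proof (induction m)
    case 0
    have "0 \<le> G" using g[of 0] norm_ge_zero order_trans by blast
    then show ?case using q by (simp add: w_def)
  next
    case (Suc m)
    have "norm (w (Suc m)) \<le> norm q * norm (w m) + norm (g m)"
      by (simp add: w_def norm_mult[symmetric] norm_triangle_ineq)
    also have "\<dots> \<le> norm q * (G / (1 - norm q)) + G"
      by (intro add_mono mult_left_mono Suc g) simp
    also have "\<dots> = G / (1 - norm q)"
      using q by (simp add: field_simps)
    finally show ?case .
  qed
  then show ?thesis by (intro exI[of _ w]) (simp add: w_def)
qed

lemma affine_recurrence_bounded_solution_expanding:
  fixes q :: "'a::{real_normed_field,banach}" and g :: "nat \<Rightarrow> 'a"
  assumes q: "norm q > 1" and g: "\<And>m. norm (g m) \<le> G"
  shows "\<exists>w. (\<forall>m. w (Suc m) = q * w m + g m) \<and> (\<forall>m. norm (w m) \<le> G / (norm q - 1))"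
proof -
  define s where "s = inverse q"
  have q_nonzero: "q \<noteq> 0" using q by auto
  then have s: "norm s < 1" and qs: "q * s = 1"
    using q by (auto simp: s_def norm_inverse inverse_less_1_iff)
  have geometric: "(\<lambda>j. norm s ^ Suc j * G) sums (norm s * G / (1 - norm s))"
    using sums_mult[OF geometric_sums[of "norm s"], of "norm s * G"] s by (simp add: field_simps)
  define f where "f m j = s ^ Suc j * g (m + j)" for m j
  have f_bound: "norm (f m j) \<le> norm s ^ Suc j * G" for m j
    unfolding f_def norm_mult norm_power by (intro mult_left_mono g) simp
  have norm_summable: "summable (\<lambda>j. norm (f m j))" for m
    by (rule summable_comparison_test'[OF sums_summable[OF geometric], of 0])
      (simp add: f_bound del: power_Suc)
  define w where "w m = - (\<Sum>j. f m j)" for m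
  have "w (Suc m) = q * w m + g m" for m
  proof -
    have "(\<lambda>j. q * f m j) sums (q * (\<Sum>j. f m j))"
      using summable_norm_cancel[OF norm_summable] by (intro sums_mult summable_sums)
    moreover have "(\<lambda>j. q * f m j) = (\<lambda>j. s ^ j * g (m + j))"
      by (simp add: f_def mult.assoc[symmetric] qs)
    ultimately have "(\<lambda>j. s ^ Suc j * g (Suc m + j)) sums (q * (\<Sum>j. f m j) - g m)"
      using sums_Suc_iff[of "\<lambda>j. s ^ j * g (m + j)"] by simp
    then show ?thesis by (simp add: w_def f_def sums_iff)
  qed
  moreover have "norm (w m) \<le> G / (norm q - 1)" for m
  proof -
    have "norm (w m) \<le> (\<Sum>j. norm (f m j))"
      unfolding w_def norm_minus_cancel by (rule summable_norm[OF norm_summable])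
    also have "\<dots> \<le> (\<Sum>j. norm s ^ Suc j * G)"
      by (rule suminf_le[OF f_bound norm_summable sums_summable[OF geometric]])
    also have "\<dots> = norm s * G / (1 - norm s)"
      using sums_unique[OF geometric] by simp
    also have "\<dots> = G / (norm q - 1)"
      using q q_nonzero by (simp add: s_def norm_divide field_simps)
    finally show ?thesis .
  qed
  ultimately show ?thesis by blast
qed

lemma affine_recurrence_bounded_solution:
  fixes q :: "'a::{real_normed_field,banach}" and g :: "nat \<Rightarrow> 'a"
  assumes "norm q \<noteq> 1" and "\<And>m. norm (g m) \<le> G"
  shows "\<exists>w. (\<forall>m. w (Suc m) = q * w m + g m) \<and> (\<forall>m. norm (w m) \<le> G / \<bar>1 - norm q\<bar>)"
proof (cases "norm q < 1")
  case True
  then show ?thesis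
    using affine_recurrence_bounded_solution_contracting[OF _ assms(2)] by simp
next
  case False
  with assms(1) have "norm q > 1" by simp
  then show ?thesis
    using affine_recurrence_bounded_solution_expanding[OF _ assms(2)] by simp
qed

definition alternating :: "'a \<Rightarrow> 'a \<Rightarrow> nat \<Rightarrow> 'a" where
  "alternating a b n = (if even n then a else b)"

lemma alternating_solution_even:
  assumes "\<And>n. z (Suc n) = alternating a b n * z n"
  shows "z (2 * m) = (a * b) ^ m * (z 0 :: 'a::comm_semiring_1)"
proof (induction m)
  case (Suc m)
  have "z (2 * Suc m) = b * (a * z (2 * m))"
    using assms[of "Suc (2 * m)"] assms[of "2 * m"] by (simp add: alternating_def)
  with Suc show ?case by (simp add: algebra_simps)
qed simp

lemma alternating_odd_entry_bound:
  fixes a b :: "'a::real_normed_field"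
  assumes ab: "norm a * norm b \<noteq> 1" and r: "\<And>n. norm (r n) \<le> \<delta>"
    and w_rec: "\<And>m. w (Suc m) = a * b * w m + (b * r (2 * m) + r (2 * m + 1))"
    and w_bound: "\<And>m. norm (w m) \<le> (1 + norm b) * \<delta> / \<bar>1 - norm a * norm b\<bar>"
  shows "norm (a * w m + r (2 * m)) \<le> \<delta> * (1 + norm a) / \<bar>1 - norm a * norm b\<bar>"
proof (cases "norm a * norm b < 1")
  case True
  have "norm (a * w m + r (2 * m)) \<le> norm a * norm (w m) + norm (r (2 * m))"
    by (metis norm_mult norm_triangle_ineq)
  also have "\<dots> \<le> norm a * ((1 + norm b) * \<delta> / \<bar>1 - norm a * norm b\<bar>) + \<delta>"
    by (intro add_mono mult_left_mono w_bound r) simp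
  also have "\<dots> = \<delta> * (1 + norm a) / \<bar>1 - norm a * norm b\<bar>"
    using True by (simp add: field_simps)
  finally show ?thesis .
next
  case False
  \<comment> \<open>Now the forward estimate via \<open>w m\<close> is too weak; go through \<open>w (Suc m)\<close> instead.\<close>
  with ab have D_eq: "\<bar>1 - norm a * norm b\<bar> = norm a * norm b - 1" by simp
  have "b * (a * w m + r (2 * m)) = w (Suc m) - r (2 * m + 1)"
    by (simp add: w_rec algebra_simps)
  then have "norm b * norm (a * w m + r (2 * m)) \<le> norm (w (Suc m)) + norm (r (2 * m + 1))"
    by (metis norm_mult norm_triangle_ineq4)
  also have "\<dots> \<le> (1 + norm b) * \<delta> / \<bar>1 - norm a * norm b\<bar> + \<delta>"
    by (intro add_mono w_bound r)
  also have "\<dots> = norm b * (\<delta> * (1 + norm a) / \<bar>1 - norm a * norm b\<bar>)"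
    using False ab by (simp add: D_eq field_simps)
  moreover have "norm b > 0" using False by (cases "b = 0") auto
  ultimately show ?thesis
    by (metis mult_le_cancel_left_pos)
qed

lemma alternating_recurrence_bounded_solution:
  fixes a b :: "'a::{real_normed_field,banach}" and r :: "nat \<Rightarrow> 'a"
  assumes ab: "norm a * norm b \<noteq> 1" and r: "\<And>n. norm (r n) \<le> \<delta>"
  defines "D \<equiv> \<bar>1 - norm a * norm b\<bar>"
  shows "\<exists>e. (\<forall>n. e (Suc n) = alternating a b n * e n + r n) \<and>
             (\<forall>n. norm (e n) \<le> \<delta> * max ((1 + norm a) / D) ((1 + norm b) / D))"
proof -
  have g_bound: "norm (b * r (2 * m) + r (2 * m + 1)) \<le> (1 + norm b) * \<delta>" for m
  proof -
    have "norm (b * r (2 * m) + r (2 * m + 1)) \<le> norm b * norm (r (2 * m)) + norm (r (2 * m + 1))"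
      by (metis norm_mult norm_triangle_ineq)
    also have "\<dots> \<le> norm b * \<delta> + \<delta>" by (intro add_mono mult_left_mono r) simp
    finally show ?thesis by (simp add: algebra_simps)
  qed
  then obtain w where w_rec: "\<And>m. w (Suc m) = a * b * w m + (b * r (2 * m) + r (2 * m + 1))"
    and w_bound: "\<And>m. norm (w m) \<le> (1 + norm b) * \<delta> / D"
    using affine_recurrence_bounded_solution
            [of "a * b" "\<lambda>m. b * r (2 * m) + r (2 * m + 1)", OF _ g_bound] ab
    by (auto simp: norm_mult D_def)
  define e where "e n = (if even n then w (n div 2) else a * w (n div 2) + r (n - 1))" for n
  have e_rec: "e (Suc n) = alternating a b n * e n + r n" for n
    by (cases "even n") (auto simp: e_def alternating_def w_rec algebra_simps elim!: oddE)
  have odd_bound: "norm (a * w m + r (2 * m)) \<le> \<delta> * (1 + norm a) / D" for m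
    unfolding D_def by (rule alternating_odd_entry_bound[OF ab r w_rec w_bound[unfolded D_def]])
  show ?thesis
  proof (intro exI[of _ e] conjI allI e_rec)
    fix n
    have "0 \<le> \<delta>" using r[of 0] norm_ge_zero order_trans by blast
    then have "norm (e n) \<le> \<delta> * (if even n then (1 + norm b) / D else (1 + norm a) / D)"
      using w_bound odd_bound by (auto simp: e_def mult.commute elim!: oddE)
    also have "\<dots> \<le> \<delta> * max ((1 + norm a) / D) ((1 + norm b) / D)"
      using \<open>0 \<le> \<delta>\<close> by (intro mult_left_mono) auto
    finally show "norm (e n) \<le> \<delta> * max ((1 + norm a) / D) ((1 + norm b) / D)" .
  qed
qed

definition ulam_constant_seq :: "(nat \<Rightarrow> 'a::real_normed_field) \<Rightarrow> real \<Rightarrow> bool" where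
  "ulam_constant_seq c L \<longleftrightarrow>
     (\<forall>\<delta>>0. \<forall>y. (\<forall>n. norm (y (Suc n) - c n * y n) \<le> \<delta>) \<longrightarrow>
        (\<exists>z. (\<forall>n. z (Suc n) = c n * z n) \<and> (\<forall>n. norm (y n - z n) \<le> L * \<delta>)))"

lemma ulam_constant_seq_alternating:
  fixes a b :: "'a::{real_normed_field,banach}"
  assumes "norm a * norm b \<noteq> 1"
  shows "ulam_constant_seq (alternating a b)
           (max ((1 + norm a) / \<bar>1 - norm a * norm b\<bar>) ((1 + norm b) / \<bar>1 - norm a * norm b\<bar>))"
  unfolding ulam_constant_seq_def
proof (intro allI impI)
  fix \<delta> :: real and y :: "nat \<Rightarrow> 'a"
  assume res: "\<forall>n. norm (y (Suc n) - alternating a b n * y n) \<le> \<delta>"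
  obtain e
    where e_rec: "\<And>n. e (Suc n) = alternating a b n * e n + (y (Suc n) - alternating a b n * y n)"
    and e_bound: "\<And>n. norm (e n) \<le> \<delta> * max ((1 + norm a) / \<bar>1 - norm a * norm b\<bar>)
                                           ((1 + norm b) / \<bar>1 - norm a * norm b\<bar>)"
    using alternating_recurrence_bounded_solution
            [OF assms, of "\<lambda>n. y (Suc n) - alternating a b n * y n" \<delta>, OF res[rule_format]]
    by blast
  show "\<exists>z. (\<forall>n. z (Suc n) = alternating a b n * z n) \<and>
            (\<forall>n. norm (y n - z n) \<le> max ((1 + norm a) / \<bar>1 - norm a * norm b\<bar>)
                                         ((1 + norm b) / \<bar>1 - norm a * norm b\<bar>) * \<delta>)"
    by (rule exI[of _ "\<lambda>n. y n - e n"]) (simp add: e_rec e_bound algebra_simps)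
qed

lemma alternating_extremal_sequence:
  fixes a b :: "'a::real_normed_field"
  assumes ab: "norm a * norm b > 1"
  defines "U \<equiv> (1 + norm b) / (norm a * norm b - 1)"
    and "V \<equiv> (1 + norm a) / (norm a * norm b - 1)"
  obtains y where "\<And>n. norm (y (Suc n) - alternating a b n * y n) = 1"
    and "\<And>m. norm (y (2 * m)) = U" and "\<And>m. norm (y (2 * m + 1)) = V"
proof -
  define A B where "A = norm a" and "B = norm b"
  have a: "a \<noteq> 0" and b: "b \<noteq> 0" using ab by auto
  define \<sigma> where "\<sigma> = a / of_real A"
  define \<omega> where "\<omega> = a * b / of_real (A * B)"
  have norm_\<sigma>: "norm \<sigma> = 1" and norm_\<omega>: "norm \<omega> = 1"
    using a b by (simp_all add: \<sigma>_def \<omega>_def A_def B_def norm_divide norm_mult)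
  have a_eq: "a = \<sigma> * of_real A" and b\<sigma>_eq: "b * \<sigma> = \<omega> * of_real B"
    using a b by (simp_all add: \<sigma>_def \<omega>_def A_def B_def field_simps)
  have "A * B - 1 \<noteq> 0" using ab by (simp add: A_def B_def)
  then have U_V: "V - A * U = -1" "U - B * V = -1"
    by (simp_all add: U_def V_def A_def[symmetric] B_def[symmetric] divide_simps)
       (simp_all add: algebra_simps)
  have U_V_pos: "U \<ge> 0" "V \<ge> 0" using ab by (simp_all add: U_def V_def)
  \<comment> \<open>\<open>y\<close> is the error built by \<open>alternating_recurrence_bounded_solution\<close> for residuals
    whose phases make all its triangle inequalities equalities.\<close>
  define y where
    "y n = (if even n then of_real U * \<omega> ^ (n div 2) else of_real V * \<sigma> * \<omega> ^ (n div 2))" for n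
  have "norm (y (Suc n) - alternating a b n * y n) = 1" for n
  proof (cases "even n")
    case True
    then obtain m where n: "n = 2 * m" by blast
    have "y (Suc n) - alternating a b n * y n = \<sigma> * \<omega> ^ m * of_real (V - A * U)"
      by (simp add: y_def n alternating_def a_eq algebra_simps)
    then show ?thesis by (simp add: U_V norm_mult norm_power norm_\<sigma> norm_\<omega>)
  next
    case False
    then obtain m where n: "n = 2 * m + 1" by (rule oddE)
    have "y (Suc n) - alternating a b n * y n
          = of_real U * \<omega> ^ Suc m - (b * \<sigma>) * of_real V * \<omega> ^ m"
      by (simp add: y_def n alternating_def algebra_simps)
    also have "\<dots> = \<omega> ^ Suc m * of_real (U - B * V)"
      unfolding b\<sigma>_eq by (simp add: algebra_simps)
    finally show ?thesis by (simp add: U_V norm_mult norm_power norm_\<omega> del: power_Suc)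
  qed
  moreover have "norm (y (2 * m)) = U" "norm (y (2 * m + 1)) = V" for m
    using U_V_pos by (simp_all add: y_def norm_mult norm_power norm_\<sigma> norm_\<omega>)
  ultimately show ?thesis using that by blast
qed

lemma ulam_constant_seq_alternating_ge:
  fixes a b :: "'a::real_normed_field"
  assumes ab: "norm a * norm b > 1" and L: "ulam_constant_seq (alternating a b) L"
  shows "max ((1 + norm a) / \<bar>1 - norm a * norm b\<bar>) ((1 + norm b) / \<bar>1 - norm a * norm b\<bar>) \<le> L"
proof -
  define U where "U = (1 + norm b) / (norm a * norm b - 1)"
  define V where "V = (1 + norm a) / (norm a * norm b - 1)"
  obtain y where y_res: "\<And>n. norm (y (Suc n) - alternating a b n * y n) = 1"
    and y_even: "\<And>m. norm (y (2 * m)) = U" and y_odd: "\<And>m. norm (y (2 * m + 1)) = V"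
    using alternating_extremal_sequence[OF ab] unfolding U_def V_def by blast
  obtain z where z_rec: "\<And>n. z (Suc n) = alternating a b n * z n"
    and z_close: "\<And>n. norm (y n - z n) \<le> L"
    using L y_res unfolding ulam_constant_seq_def by (metis order_refl mult_1_right zero_less_one)
  have "z 0 = 0"
  proof (rule ccontr)
    assume "z 0 \<noteq> 0"
    obtain m where m: "(U + L) / norm (z 0) < (norm a * norm b) ^ m"
      using real_arch_pow[OF ab] by blast
    have "norm (z (2 * m)) \<le> norm (y (2 * m)) + norm (y (2 * m) - z (2 * m))"
      using norm_triangle_sub[of "z (2 * m)" "y (2 * m)"] by (simp add: norm_minus_commute)
    also have "\<dots> \<le> U + L" using y_even z_close by (intro add_mono) auto
    finally have "(norm a * norm b) ^ m * norm (z 0) \<le> U + L"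
      by (simp add: alternating_solution_even[OF z_rec] norm_mult norm_power power_mult_distrib)
    with m \<open>z 0 \<noteq> 0\<close> show False by (simp add: divide_less_eq)
  qed
  then have "z 1 = 0" using z_rec[of 0] by simp
  have "U \<le> L" using z_close[of 0] y_even[of 0] \<open>z 0 = 0\<close> by simp
  moreover have "V \<le> L" using z_close[of 1] y_odd[of 0] \<open>z 1 = 0\<close> by simp
  ultimately show ?thesis using ab by (simp add: U_def V_def)
qed

lemma ball_hZ_iff: "(\<forall>t\<in>hZ h. P t) \<longleftrightarrow> (\<forall>n. P (real n * h))"
  by (auto simp: hZ_def)

lemma hdiff_sub_mult_grid:
  assumes "h > 0"
  shows "hdiff h x (real n * h) - p (real n * h) * x (real n * h)
       = (x (real (Suc n) * h) - (1 + of_real h * p (real n * h)) * x (real n * h)) / of_real h"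
  using assms by (simp add: hdiff_def distrib_right field_simps)

lemma ulam_constant_seq_if_ulam_constant:
  fixes p :: "real \<Rightarrow> complex"
  assumes h: "h > 0" and K: "ulam_constant h p K"
  defines "c \<equiv> \<lambda>n. 1 + of_real h * p (real n * h)"
  shows "ulam_constant_seq c (K / h)"
  unfolding ulam_constant_seq_def
proof (intro allI impI)
  fix \<delta> :: real and y :: "nat \<Rightarrow> complex"
  assume "\<delta> > 0" and y: "\<forall>n. norm (y (Suc n) - c n * y n) \<le> \<delta>"
  define \<phi> where "\<phi> t = y (nat \<lfloor>t / h\<rfloor>)" for t
  have \<phi>_grid: "\<phi> (real n * h) = y n" for n
    using h by (simp add: \<phi>_def)
  have "\<delta> / h > 0" using \<open>\<delta> > 0\<close> h by simp
  moreover have "\<forall>t\<in>hZ h. cmod (hdiff h \<phi> t - p t * \<phi> t) \<le> \<delta> / h"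
    unfolding ball_hZ_iff hdiff_sub_mult_grid[OF h] norm_divide unfolding \<phi>_grid
    using y h by (simp add: c_def divide_right_mono)
  ultimately obtain x where x_sol: "\<forall>t\<in>hZ h. hdiff h x t - p t * x t = 0"
    and x_close: "\<forall>t\<in>hZ h. cmod (\<phi> t - x t) \<le> K * (\<delta> / h)"
    using K[unfolded ulam_constant_def, THEN conjunct2, rule_format] by blast
  show "\<exists>z. (\<forall>n. z (Suc n) = c n * z n) \<and> (\<forall>n. norm (y n - z n) \<le> K / h * \<delta>)"
  proof (intro exI[of _ "\<lambda>n. x (real n * h)"] conjI allI)
    show "x (real (Suc n) * h) = c n * x (real n * h)" for n
      using x_sol h unfolding ball_hZ_iff hdiff_sub_mult_grid[OF h] by (simp add: c_def)
    show "norm (y n - x (real n * h)) \<le> K / h * \<delta>" for n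
      using x_close unfolding ball_hZ_iff \<phi>_grid by simp
  qed
qed

lemma ulam_constant_if_ulam_constant_seq:
  fixes p :: "real \<Rightarrow> complex"
  assumes h: "h > 0" and "K > 0"
  assumes K: "ulam_constant_seq (\<lambda>n. 1 + of_real h * p (real n * h)) (K / h)"
  shows "ulam_constant h p K"
  unfolding ulam_constant_def
proof (intro conjI allI impI \<open>K > 0\<close>)
  fix \<epsilon> :: real and \<phi> :: "real \<Rightarrow> complex"
  assume "\<epsilon> > 0" and \<phi>: "\<forall>t\<in>hZ h. cmod (hdiff h \<phi> t - p t * \<phi> t) \<le> \<epsilon>"
  have "h * \<epsilon> > 0" using \<open>\<epsilon> > 0\<close> h by simp
  moreover have "\<forall>n. norm (\<phi> (real (Suc n) * h) - (1 + of_real h * p (real n * h)) * \<phi> (real n * h))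
                   \<le> h * \<epsilon>"
    using \<phi> h unfolding ball_hZ_iff hdiff_sub_mult_grid[OF h] norm_divide
    by (simp add: divide_le_eq mult.commute)
  ultimately obtain z where z_sol: "\<forall>n. z (Suc n) = (1 + of_real h * p (real n * h)) * z n"
    and z_close: "\<forall>n. norm (\<phi> (real n * h) - z n) \<le> K / h * (h * \<epsilon>)"
    using K[unfolded ulam_constant_seq_def, rule_format, of "h * \<epsilon>" "\<lambda>n. \<phi> (real n * h)"]
    by blast
  define x where "x t = z (nat \<lfloor>t / h\<rfloor>)" for t
  have x_grid: "x (real n * h) = z n" for n
    using h by (simp add: x_def)
  show "\<exists>x. (\<forall>t\<in>hZ h. hdiff h x t - p t * x t = 0) \<and> (\<forall>t\<in>hZ h. cmod (\<phi> t - x t) \<le> K * \<epsilon>)"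
  proof (intro exI[of _ x] conjI)
    show "\<forall>t\<in>hZ h. hdiff h x t - p t * x t = 0"
      unfolding ball_hZ_iff hdiff_sub_mult_grid[OF h] unfolding x_grid using z_sol h by simp
    show "\<forall>t\<in>hZ h. cmod (\<phi> t - x t) \<le> K * \<epsilon>"
      unfolding ball_hZ_iff x_grid using z_close h by simp
  qed
qed

lemma pcoef_grid:
  assumes "h > 0"
  shows "pcoef h p0 p1 (real n * h) = alternating p0 p1 n"
proof -
  have "(\<exists>k. real n = real (2 * k)) \<longleftrightarrow> even n"
    by (metis evenE dvd_triv_left of_nat_eq_iff)
  then show ?thesis using assms by (simp add: pcoef_def alternating_def)
qed

lemma ulam_constant_pcoef_iff:
  assumes h: "h > 0"
  shows "ulam_constant h (pcoef h p0 p1) K \<longleftrightarrow>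
           K > 0 \<and> ulam_constant_seq (alternating (1 + of_real h * p0) (1 + of_real h * p1)) (K / h)"
proof -
  have c: "(\<lambda>n. 1 + of_real h * pcoef h p0 p1 (real n * h))
             = alternating (1 + of_real h * p0) (1 + of_real h * p1)"
    using h by (auto simp: pcoef_grid alternating_def)
  show ?thesis
  proof
    assume K: "ulam_constant h (pcoef h p0 p1) K"
    then have "K > 0" by (simp add: ulam_constant_def)
    with ulam_constant_seq_if_ulam_constant[OF h K] show "K > 0 \<and> ulam_constant_seq
        (alternating (1 + of_real h * p0) (1 + of_real h * p1)) (K / h)"
      unfolding c by simp
  next
    assume "K > 0 \<and> ulam_constant_seq (alternating (1 + of_real h * p0) (1 + of_real h * p1)) (K / h)"
    then show "ulam_constant h (pcoef h p0 p1) K"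
      using ulam_constant_if_ulam_constant_seq[OF h, of K "pcoef h p0 p1"] unfolding c by blast
  qed
qed

theorem theorem2p3:
  fixes h :: real and p0 p1 :: complex
  assumes "h > 0"
    and "p0 \<noteq> - 1 / complex_of_real h" and "p1 \<noteq> - 1 / complex_of_real h"
    and "p0 \<noteq> p1"
    and "0 < cmod (1 + h * p0) * cmod (1 + h * p1)"
    and "cmod (1 + h * p0) * cmod (1 + h * p1) \<noteq> 1"
  defines "K0 \<equiv> h * max ((1 + cmod (1 + h * p0)) / \<bar>1 - cmod (1 + h * p0) * cmod (1 + h * p1)\<bar>)
                         ((1 + cmod (1 + h * p1)) / \<bar>1 - cmod (1 + h * p0) * cmod (1 + h * p1)\<bar>)"
  shows "ulam_stable h (pcoef h p0 p1) \<and> ulam_constant h (pcoef h p0 p1) K0 \<and>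
         (cmod (1 + h * p0) * cmod (1 + h * p1) > 1 \<longrightarrow> min_ulam_constant h (pcoef h p0 p1) K0)"
proof -
  define a b where "a = 1 + complex_of_real h * p0" and "b = 1 + complex_of_real h * p1"
  define L0 where "L0 = max ((1 + cmod a) / \<bar>1 - cmod a * cmod b\<bar>) ((1 + cmod b) / \<bar>1 - cmod a * cmod b\<bar>)"
  have reduction: "ulam_constant h (pcoef h p0 p1) K
                     \<longleftrightarrow> K > 0 \<and> ulam_constant_seq (alternating a b) (K / h)" for K
    unfolding a_def b_def by (rule ulam_constant_pcoef_iff[OF \<open>h > 0\<close>])
  have K0: "K0 = h * L0"
    by (simp add: K0_def L0_def a_def b_def)
  have ab: "cmod a * cmod b \<noteq> 1"
    using assms(6) by (simp add: a_def b_def)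
  then have "0 < (1 + cmod a) / \<bar>1 - cmod a * cmod b\<bar>"
    by (intro divide_pos_pos add_pos_nonneg) auto
  then have "L0 > 0"
    unfolding L0_def by (simp add: less_max_iff_disj)
  have stable: "ulam_constant h (pcoef h p0 p1) K0"
    using reduction ulam_constant_seq_alternating[OF ab] \<open>h > 0\<close> \<open>L0 > 0\<close>
    by (simp add: K0 L0_def)
  moreover have "min_ulam_constant h (pcoef h p0 p1) K0" if "cmod a * cmod b > 1"
    unfolding min_ulam_constant_def
  proof (intro conjI stable allI impI notI)
    fix K assume "0 < K \<and> K < K0" and "ulam_constant h (pcoef h p0 p1) K"
    then have "L0 \<le> K / h" and "K < h * L0"
      using reduction ulam_constant_seq_alternating_ge[OF that] by (auto simp: K0 L0_def)
    then show False using \<open>h > 0\<close> by (simp add: pos_le_divide_eq mult.commute)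
  qed
  ultimately show ?thesis by (auto simp: ulam_stable_def a_def b_def)
qed

end
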